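(* If a $\mathsf{BST}^{\otimes}$-conjunction $\Phi$ is fulfilled by a finite accessible $\otimes$-graph that admits a topological $\otimes$-order, then $\Phi$ is satisfied by a hereditarily finite set assignment (i.e. one with $\bigcup_{v}Mv\in\mathsf{HF}$).
   Context: Sets range over the von Neumann universe of well-founded sets; $\mathsf{HF}$ is the set of hereditarily finite sets. For sets $s,t$, $s\otimes t=\{\{u,v\} : u\in s,\ v\in t\}$. A $\mathsf{BST}^{\otimes}$-conjunction is a finite conjunction of literals of the forms $x=y\cup z$, $x=y\setminus z$, $x=y\otimes z$, $x\neq y$; a set assignment $M$ satisfies it if all literals are true when each variable $v$ is interpreted as $Mv$. A $\otimes$-graph $\mathcal G=(\mathcal P,\mathcal N,\mathcal T)$ consists of a set $\mathcal P$ of places, the set of nodes $\mathcal N=\mathcal P\otimes\mathcal P$ (the nonempty subsets of $\mathcal P$ with at most two elements), $\mathcal P\cap\mathcal N=\emptyset$, and a target map $\mathcal T:\mathcal N\to\mathcal P(\mathcal P)$. A source place is a place belonging to no $\mathcal T(A)$; a node $A$ is a $\otimes$-node if $\mathcal T(A)\neq\emptyset$. The accessible places form the smallest set of places containing all source places and containing $\mathcal T(A)$ whenever all places of $A$ belong to it; $\mathcal G$ is accessible if every place is accessible. A topological $\otimes$-order of $\mathcal G$ is a total order $\prec$ on $\mathcal P$ with $\max_\prec A\prec\max_\prec\mathcal T(A)$ for every $\otimes$-node $A$. A map $\mathfrak F:\mathrm{Vars}(\Phi)\to\mathcal P(\mathcal P)$ is $\mathcal G$-fulfilling for $\Phi$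 if: (a) $\mathfrak F(x)=\mathfrak F(y)\star\mathfrak F(z)$ for each conjunct $x=y\star z$, $\star\in\{\cup,\setminus\}$; (b) $\mathfrak F(x)\neq\mathfrak F(y)$ for each conjunct $x\neq y$; (c) for each conjunct $x=y\otimes z$: (c1) $\emptyset\neq\mathcal T(\{\upsilon,\zeta\})\subseteq\mathfrak F(x)$ for all $\upsilon\in\mathfrak F(y),\zeta\in\mathfrak F(z)$; (c2) $\mathfrak F(x)\subseteq\bigcup\{\mathcal T(A):A\in\mathfrak F(y)\otimes\mathfrak F(z)\}$; (c3) $\bigcup\{\mathcal T(A):A\in\mathcal N\setminus(\mathfrak F(y)\otimes\mathfrak F(z))\}\cap\mathfrak F(x)=\emptyset$. $\mathcal G$ fulfills $\Phi$ if such a map exists. *)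

theory Defs
  imports "HOL-Library.FSet"
begin

text \<open>The hereditarily finite sets HF, realised as the (well-founded, extensional)
  datatype of finite sets of hereditarily finite sets.\<close>

datatype hf = HF (elts: "hf fset")

definition hunion :: "hf \<Rightarrow> hf \<Rightarrow> hf" where
  "hunion a b = HF (elts a |\<union>| elts b)"

definition hdiff :: "hf \<Rightarrow> hf \<Rightarrow> hf" where
  "hdiff a b = HF (elts a |-| elts b)"

text \<open>s \<otimes> t = { {u,v} : u \<in> s, v \<in> t }\<close>
definition htens :: "hf \<Rightarrow> hf \<Rightarrow> hf" where
  "htens a b = HF (ffUnion ((\<lambda>u. (\<lambda>v. HF {|u, v|}) |`| elts b) |`| elts a))"

datatype 'v literal =
    LUn 'v 'v 'v     (* x = y \<union> z *)
  | LDiff 'v 'v 'v   (* x = y \<setminus> z *)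
  | LTens 'v 'v 'v   (* x = y \<otimes> z *)
  | LNeq 'v 'v       (* x \<noteq> y *)

type_synonym 'v conj = "'v literal list"

fun lit_vars :: "'v literal \<Rightarrow> 'v set" where
  "lit_vars (LUn x y z) = {x, y, z}"
| "lit_vars (LDiff x y z) = {x, y, z}"
| "lit_vars (LTens x y z) = {x, y, z}"
| "lit_vars (LNeq x y) = {x, y}"

definition Vars :: "'v conj \<Rightarrow> 'v set" where
  "Vars \<Phi> = (\<Union>l\<in>set \<Phi>. lit_vars l)"

fun hf_sat_lit :: "('v \<Rightarrow> hf) \<Rightarrow> 'v literal \<Rightarrow> bool" where
  "hf_sat_lit M (LUn x y z) = (M x = hunion (M y) (M z))"
| "hf_sat_lit M (LDiff x y z) = (M x = hdiff (M y) (M z))"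
| "hf_sat_lit M (LTens x y z) = (M x = htens (M y) (M z))"
| "hf_sat_lit M (LNeq x y) = (M x \<noteq> M y)"

definition hf_satisfies :: "('v \<Rightarrow> hf) \<Rightarrow> 'v conj \<Rightarrow> bool" where
  "hf_satisfies M \<Phi> = (\<forall>l\<in>set \<Phi>. hf_sat_lit M l)"

definition tens :: "'a set \<Rightarrow> 'a set \<Rightarrow> 'a set set" where
  "tens s t = {{u, v} | u v. u \<in> s \<and> v \<in> t}"

text \<open>A tensor-graph is given by its set of places P and target map T (on nodes);
  the nodes are P \<otimes> P, which lives in a different type than the places.\<close>

definition nodes :: "'p set \<Rightarrow> 'p set set" where
  "nodes P = tens P P"

definition tgraph :: "'p set \<Rightarrow> ('p set \<Rightarrow> 'p set) \<Rightarrow> bool" where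
  "tgraph P T = (\<forall>A\<in>nodes P. T A \<subseteq> P)"

definition source_place :: "'p set \<Rightarrow> ('p set \<Rightarrow> 'p set) \<Rightarrow> 'p \<Rightarrow> bool" where
  "source_place P T p = (p \<in> P \<and> (\<forall>A\<in>nodes P. p \<notin> T A))"

definition tens_node :: "'p set \<Rightarrow> ('p set \<Rightarrow> 'p set) \<Rightarrow> 'p set \<Rightarrow> bool" where
  "tens_node P T A = (A \<in> nodes P \<and> T A \<noteq> {})"

inductive_set accessible_places :: "'p set \<Rightarrow> ('p set \<Rightarrow> 'p set) \<Rightarrow> 'p set"
  for P T where
  src: "source_place P T p \<Longrightarrow> p \<in> accessible_places P T"
| step: "A \<in> nodes P \<Longrightarrow> (\<And>p. p \<in> A \<Longrightarrow> p \<in> accessible_places P T) \<Longrightarrow> q \<in> T A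
          \<Longrightarrow> q \<in> accessible_places P T"

definition accessible :: "'p set \<Rightarrow> ('p set \<Rightarrow> 'p set) \<Rightarrow> bool" where
  "accessible P T = (P \<subseteq> accessible_places P T)"

definition max_wrt :: "'p rel \<Rightarrow> 'p set \<Rightarrow> 'p" where
  "max_wrt r S = (THE m. m \<in> S \<and> (\<forall>s\<in>S. s = m \<or> (s, m) \<in> r))"

definition topological_order :: "'p set \<Rightarrow> ('p set \<Rightarrow> 'p set) \<Rightarrow> 'p rel \<Rightarrow> bool" where
  "topological_order P T r =
     (strict_linear_order_on P r \<and> r \<subseteq> P \<times> P \<and>
      (\<forall>A. tens_node P T A \<longrightarrow> (max_wrt r A, max_wrt r (T A)) \<in> r))"

fun fulfills_lit :: "'p set \<Rightarrow> ('p set \<Rightarrow> 'p set) \<Rightarrow> ('v \<Rightarrow> 'p set) \<Rightarrow> 'v literal \<Rightarrow> bool" where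
  "fulfills_lit P T F (LUn x y z) = (F x = F y \<union> F z)"
| "fulfills_lit P T F (LDiff x y z) = (F x = F y - F z)"
| "fulfills_lit P T F (LNeq x y) = (F x \<noteq> F y)"
| "fulfills_lit P T F (LTens x y z) =
     ((\<forall>u\<in>F y. \<forall>v\<in>F z. T {u, v} \<noteq> {} \<and> T {u, v} \<subseteq> F x) \<and>
      F x \<subseteq> \<Union>(T ` tens (F y) (F z)) \<and>
      \<Union>(T ` (nodes P - tens (F y) (F z))) \<inter> F x = {})"

definition fulfilling :: "'p set \<Rightarrow> ('p set \<Rightarrow> 'p set) \<Rightarrow> ('v \<Rightarrow> 'p set) \<Rightarrow> 'v conj \<Rightarrow> bool" where
  "fulfilling P T F \<Phi> = ((\<forall>v\<in>Vars \<Phi>. F v \<subseteq> P) \<and> (\<forall>l\<in>set \<Phi>. fulfills_lit P T F l))"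

definition graph_fulfills :: "'p set \<Rightarrow> ('p set \<Rightarrow> 'p set) \<Rightarrow> 'v conj \<Rightarrow> bool" where
  "graph_fulfills P T \<Phi> = (\<exists>F. fulfilling P T F \<Phi>)"

end

theory Submission
  imports Defs "HOL-Library.Nat_Bijection"
begin

text \<open>Every place p is realised by a finite set sigma p of hereditarily finite sets, nonempty and
  pairwise disjoint for distinct places, and a variable x by the union of sigma over its places
  F x. Union and difference are then preserved, and so is inequality. For a tensor literal
  x = y \<otimes> z, sigma t must consist of pairs {u, v} with u \<in> sigma a, v \<in> sigma b and
  t \<in> T {a, b}, and every such pair must lie in some sigma t with t \<in> T {a, b}. Along the
  topological order, each pair over a node {a, b} is put into the greatest target of {a, b},
  which lies above a and b, so the definition is well-founded. Accessibility supplies every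
  non-source place t with parents a, b of smaller depth; t receives seeds, pairs of seeds of its
  parents, so that sigma t is nonempty, while source places receive atoms. There are enough
  seeds to make the seed map injective, and disjointness then follows by induction on the
  membership relation.\<close>

lemma hf_eqI: "fset (elts a) = fset (elts b) \<Longrightarrow> a = b"
  by (simp add: fset_inject hf.expand)

lemma fset_elts_hunion: "fset (elts (hunion a b)) = fset (elts a) \<union> fset (elts b)"
  by (simp add: hunion_def)

lemma fset_elts_hdiff: "fset (elts (hdiff a b)) = fset (elts a) - fset (elts b)"
  by (simp add: hdiff_def)

lemma fset_elts_htens:
  "fset (elts (htens a b)) = {HF {|u, v|} | u v. u \<in> fset (elts a) \<and> v \<in> fset (elts b)}"
  by (auto simp add: htens_def ffUnion.rep_eq fimage.rep_eq)

definition hf_of_set :: "hf set \<Rightarrow> hf" where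
  "hf_of_set S = HF (Abs_fset S)"

lemma fset_elts_hf_of_set: "finite S \<Longrightarrow> fset (elts (hf_of_set S)) = S"
  by (simp add: hf_of_set_def Abs_fset_inverse)

lemma hf_of_set_inject: "finite A \<Longrightarrow> finite B \<Longrightarrow> hf_of_set A = hf_of_set B \<longleftrightarrow> A = B"
  by (metis fset_elts_hf_of_set)

lemma hunion_hf_of_set:
  "finite A \<Longrightarrow> finite B \<Longrightarrow> hunion (hf_of_set A) (hf_of_set B) = hf_of_set (A \<union> B)"
  by (rule hf_eqI) (simp add: fset_elts_hunion fset_elts_hf_of_set)

lemma hdiff_hf_of_set:
  "finite A \<Longrightarrow> finite B \<Longrightarrow> hdiff (hf_of_set A) (hf_of_set B) = hf_of_set (A - B)"
  by (rule hf_eqI) (simp add: fset_elts_hdiff fset_elts_hf_of_set)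

lemma htens_hf_of_set:
  "finite A \<Longrightarrow> finite B \<Longrightarrow>
    htens (hf_of_set A) (hf_of_set B) = hf_of_set {HF {|u, v|} | u v. u \<in> A \<and> v \<in> B}"
  by (rule hf_eqI) (simp add: fset_elts_htens fset_elts_hf_of_set finite_image_set2)

lemma HF_doubleton_eq_iff:
  "HF {|u, v|} = HF {|u', v'|} \<longleftrightarrow> (u = u' \<and> v = v') \<or> (u = v' \<and> v = u')"
  by (simp flip: fset_inject add: doubleton_eq_iff)

primrec hnat :: "nat \<Rightarrow> hf" where
  "hnat 0 = HF {||}"
| "hnat (Suc k) = HF {|hnat k|}"

lemma inj_hnat: "inj hnat"
proof (rule injI)
  show "hnat k = hnat l \<Longrightarrow> k = l" for k l
  proof (induction k arbitrary: l)
    case 0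
    then show ?case by (cases l) auto
  next
    case (Suc k)
    then show ?case by (cases l) auto
  qed
qed

text \<open>Three distinct elements make an atom differ from every pair.\<close>
definition hatom :: "nat \<Rightarrow> hf" where
  "hatom k = HF {|hnat 0, hnat 1, hnat (k + 2)|}"

lemma fset_elts_hatom: "fset (elts (hatom k)) = {hnat 0, hnat 1, hnat (k + 2)}"
  by (simp add: hatom_def)

lemma hnat_distinct: "hnat 0 \<noteq> hnat 1" "hnat 0 \<noteq> hnat (k + 2)" "hnat 1 \<noteq> hnat (k + 2)"
  using inj_hnat by (auto dest: injD)

lemma inj_hatom: "inj hatom"
proof (rule injI)
  fix k l assume "hatom k = hatom l"
  then have "{hnat 0, hnat 1, hnat (k + 2)} = {hnat 0, hnat 1, hnat (l + 2)}"
    by (simp only: flip: fset_elts_hatom)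
  then have "hnat (k + 2) \<in> {hnat 0, hnat 1, hnat (l + 2)}"
    by blast
  then have "hnat (k + 2) = hnat (l + 2)"
    using hnat_distinct(2,3)[of k] by auto
  then show "k = l"
    using inj_hnat by (auto dest: injD)
qed

lemma hatom_ne_doubleton: "hatom k \<noteq> HF {|u, v|}"
proof
  assume "hatom k = HF {|u, v|}"
  then have "{hnat 0, hnat 1, hnat (k + 2)} = {u, v}"
    unfolding fset_elts_hatom[symmetric] by simp
  then have "hnat 0 \<in> {u, v}" "hnat 1 \<in> {u, v}" "hnat (k + 2) \<in> {u, v}"
    by blast+
  then show False
    using hnat_distinct(1) hnat_distinct(2,3)[of k] by auto
qed

lemma add_mult_eq_cancel:
  fixes x y n i j :: nat
  assumes "x < n" "y < n" "x + n * i = y + n * j"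
  shows "x = y \<and> i = j"
proof
  show "x = y"
    using arg_cong[OF assms(3), of "\<lambda>m. m mod n"] assms(1,2) by simp
  then show "i = j"
    using assms(1,3) by simp
qed

lemma max_wrt_eqI:
  assumes r: "trans r" "irrefl r" and m: "m \<in> S" "\<forall>s\<in>S. s = m \<or> (s, m) \<in> r"
  shows "max_wrt r S = m"
proof -
  have "m' = m" if "m' \<in> S" "\<forall>s\<in>S. s = m' \<or> (s, m') \<in> r" for m'
  proof (rule ccontr)
    assume "m' \<noteq> m"
    then have "(m', m) \<in> r" "(m, m') \<in> r"
      using that m by metis+
    then show False
      using r unfolding trans_def irrefl_def by blast
  qed
  then show ?thesis
    unfolding max_wrt_def using m by (intro the_equality) blast+
qed

lemma max_wrt_strict_linear_order:
  assumes order: "strict_linear_order_on P r" and "finite S" "S \<noteq> {}" "S \<subseteq> P"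
  shows "max_wrt r S \<in> S \<and> (\<forall>s\<in>S. s = max_wrt r S \<or> (s, max_wrt r S) \<in> r)"
proof -
  have r: "trans r" "irrefl r" "total_on P r"
    using order by (simp_all add: strict_linear_order_on_def)
  have "\<exists>m\<in>S. \<forall>s\<in>S. s = m \<or> (s, m) \<in> r"
    using assms(2-4)
  proof (induction S rule: finite_ne_induct)
    case (insert x S)
    then obtain m where m: "m \<in> S" "\<forall>s\<in>S. s = m \<or> (s, m) \<in> r"
      by auto
    show ?case
    proof (cases "x = m \<or> (x, m) \<in> r")
      case False
      then have "(m, x) \<in> r"
        using r(3) m(1) insert.prems unfolding total_on_def by blast
      then have "\<forall>s\<in>S. (s, x) \<in> r"
        using m(2) transD[OF r(1)] by metis
      then show ?thesis
        by blast
    qed (use m in auto)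
  qed simp
  then show ?thesis
    using max_wrt_eqI[OF r(1,2)] by metis
qed

section \<open>Depth of a place in an accessible graph\<close>

locale accessible_tgraph =
  fixes P :: "'p set" and T :: "'p set \<Rightarrow> 'p set"
  assumes tgraph: "tgraph P T" and accessible: "accessible P T"
begin

lemma doubleton_in_nodes: "a \<in> P \<Longrightarrow> b \<in> P \<Longrightarrow> {a, b} \<in> nodes P"
  unfolding nodes_def tens_def by blast

lemma target_subset: "a \<in> P \<Longrightarrow> b \<in> P \<Longrightarrow> T {a, b} \<subseteq> P"
  using tgraph doubleton_in_nodes unfolding tgraph_def by blast

primrec stage :: "nat \<Rightarrow> 'p set" where
  "stage 0 = {p. source_place P T p}"
| "stage (Suc k) = stage k \<union> {q. \<exists>a\<in>stage k. \<exists>b\<in>stage k. a \<in> P \<and> b \<in> P \<and> q \<in> T {a, b}}"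

lemma stage_mono: "k \<le> l \<Longrightarrow> stage k \<subseteq> stage l"
  by (rule lift_Suc_mono_le[of stage]) auto

lemma accessible_place_in_stage: "p \<in> accessible_places P T \<Longrightarrow> \<exists>k. p \<in> stage k"
proof (induction rule: accessible_places.induct)
  case (src p)
  then show ?case
    by (metis mem_Collect_eq stage.simps(1))
next
  case (step A q)
  then obtain a b where ab: "A = {a, b}" "a \<in> P" "b \<in> P"
    unfolding nodes_def tens_def by blast
  then obtain ka kb where "a \<in> stage ka" "b \<in> stage kb"
    using step.IH by blast
  then have "a \<in> stage (max ka kb)" "b \<in> stage (max ka kb)"
    using stage_mono[of ka "max ka kb"] stage_mono[of kb "max ka kb"] by auto
  then have "q \<in> stage (Suc (max ka kb))"
    using step.hyps(3) ab by auto
  then show ?case ..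
qed

definition depth :: "'p \<Rightarrow> nat" where
  "depth p = (LEAST k. p \<in> stage k)"

lemma in_stage_depth: "p \<in> P \<Longrightarrow> p \<in> stage (depth p)"
  using accessible accessible_place_in_stage unfolding accessible_def depth_def
  by (meson LeastI subsetD)

lemma depth_le: "p \<in> stage k \<Longrightarrow> depth p \<le> k"
  unfolding depth_def by (rule Least_le)

lemma source_place_if_depth_0: "p \<in> P \<Longrightarrow> depth p = 0 \<Longrightarrow> source_place P T p"
  using in_stage_depth by fastforce

lemma exists_parents_of_lower_depth:
  assumes "p \<in> P" "depth p \<noteq> 0"
  shows "\<exists>a b. a \<in> P \<and> b \<in> P \<and> p \<in> T {a, b} \<and> depth a < depth p \<and> depth b < depth p"
proof -
  obtain d where d: "depth p = Suc d"
    using assms(2) not0_implies_Suc by blast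
  have "p \<notin> stage d"
    using depth_le d by fastforce
  moreover have "p \<in> stage (Suc d)"
    using in_stage_depth[OF assms(1)] d by simp
  ultimately obtain a b where "a \<in> stage d" "b \<in> stage d" "a \<in> P" "b \<in> P" "p \<in> T {a, b}"
    by auto
  moreover have "depth a < depth p" "depth b < depth p"
    using depth_le[of a d] depth_le[of b d] d \<open>a \<in> stage d\<close> \<open>b \<in> stage d\<close> by simp_all
  ultimately show ?thesis
    by blast
qed

definition parents :: "'p \<Rightarrow> 'p \<times> 'p" where
  "parents p = (SOME (a, b). a \<in> P \<and> b \<in> P \<and> p \<in> T {a, b} \<and> depth a < depth p \<and> depth b < depth p)"

lemma parentsD:
  assumes "p \<in> P" "depth p \<noteq> 0" "parents p = (a, b)"
  shows "a \<in> P \<and> b \<in> P \<and> p \<in> T {a, b} \<and> depth a < depth p \<and> depth b < depth p"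
proof -
  let ?parents = "\<lambda>(a, b). a \<in> P \<and> b \<in> P \<and> p \<in> T {a, b} \<and> depth a < depth p \<and> depth b < depth p"
  have "\<exists>x. ?parents x"
    using exists_parents_of_lower_depth[OF assms(1,2)] by auto
  then have "?parents (parents p)"
    unfolding parents_def by (rule someI_ex)
  then show ?thesis
    using assms(3) by simp
qed

end

section \<open>Disjoint realisation of the places by hereditarily finite sets\<close>

locale ordered_tgraph = accessible_tgraph P T
  for P :: "'p set" and T :: "'p set \<Rightarrow> 'p set" +
  fixes r :: "'p rel"
  assumes finite_places: "finite P" and topological_order: "topological_order P T r"
begin

lemma strict_linear_order: "strict_linear_order_on P r"
  using topological_order unfolding topological_order_def by blast

lemma wf_order: "wf r"
proof (rule finite_acyclic_wf)
  have "r \<subseteq> P \<times> P"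
    using topological_order unfolding topological_order_def by blast
  then show "finite r"
    using finite_places finite_subset by blast
  show "acyclic r"
    using strict_linear_order
    by (simp add: acyclic_irrefl strict_linear_order_on_def trancl_id)
qed

lemma max_target_in_target:
  "a \<in> P \<Longrightarrow> b \<in> P \<Longrightarrow> T {a, b} \<noteq> {} \<Longrightarrow> max_wrt r (T {a, b}) \<in> T {a, b}"
  using max_wrt_strict_linear_order[OF strict_linear_order] target_subset finite_places
  by (meson finite_subset)

lemma below_max_target:
  assumes "a \<in> P" "b \<in> P" "T {a, b} \<noteq> {}"
  shows "(a, max_wrt r (T {a, b})) \<in> r \<and> (b, max_wrt r (T {a, b})) \<in> r"
proof -
  have "tens_node P T {a, b}"
    using assms doubleton_in_nodes unfolding tens_node_def by blast
  then have "(max_wrt r {a, b}, max_wrt r (T {a, b})) \<in> r"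
    using topological_order unfolding topological_order_def by blast
  moreover have "\<forall>s\<in>{a, b}. s = max_wrt r {a, b} \<or> (s, max_wrt r {a, b}) \<in> r"
    using max_wrt_strict_linear_order[OF strict_linear_order] assms by simp
  moreover have "trans r"
    using strict_linear_order unfolding strict_linear_order_on_def by blast
  ultimately show ?thesis
    by (metis insertCI transD)
qed

definition index :: "'p \<Rightarrow> nat" where
  "index = (SOME h. bij_betw h P {0..<card P})"

lemma bij_betw_index: "bij_betw index P {0..<card P}"
  unfolding index_def using ex_bij_betw_finite_nat[OF finite_places] by (rule someI_ex)

lemma index_less_card: "t \<in> P \<Longrightarrow> index t < card P"
  using bij_betwE[OF bij_betw_index] by auto

lemma inj_on_index: "inj_on index P"
  using bij_betw_index by (rule bij_betw_imp_inj_on)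

definition child_index :: "'p \<Rightarrow> nat \<Rightarrow> nat" where
  "child_index t i = index t + card P * i"

lemma child_index_inj:
  assumes "t \<in> P" "t' \<in> P" "child_index t i = child_index t' i'"
  shows "t = t' \<and> i = i'"
  using add_mult_eq_cancel[OF index_less_card index_less_card assms(3)[unfolded child_index_def]]
    assms(1,2) inj_on_index by (auto dest: inj_onD)

text \<open>A place of depth d carries n^(D - d) seeds, with n = card P and D the maximal depth:
  the i-th seed of t pairs the (child_index t i)-th seeds of its parents, and this index stays
  below the seed counts of the shallower parents.\<close>
definition seed_count :: "'p \<Rightarrow> nat" where
  "seed_count t = card P ^ (Max (depth ` P) - depth t)"

lemma child_index_less_seed_count:
  assumes "t \<in> P" "i < seed_count t" "a \<in> P" "depth a < depth t"
  shows "child_index t i < seed_count a"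
proof -
  let ?n = "card P"
  have n: "1 \<le> ?n"
    using assms(1) finite_places by (simp add: Suc_le_eq card_gt_0_iff) blast
  have "depth t \<le> Max (depth ` P)"
    using finite_places assms(1) by simp
  then have e: "Suc (Max (depth ` P) - depth t) \<le> Max (depth ` P) - depth a"
    using assms(4) by simp
  have "child_index t i < ?n * Suc i"
    unfolding child_index_def using index_less_card[OF assms(1)] by simp
  also have "\<dots> \<le> ?n * seed_count t"
    using mult_le_mono2[of "Suc i" "seed_count t" ?n] assms(2) by simp
  also have "\<dots> = ?n ^ Suc (Max (depth ` P) - depth t)"
    unfolding seed_count_def by simp
  also have "\<dots> \<le> seed_count a"
    unfolding seed_count_def by (rule power_increasing[OF e n])
  finally show ?thesis .
qed

function seed :: "'p \<Rightarrow> nat \<Rightarrow> hf" where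
  "seed t i =
    (if t \<in> P \<and> depth t \<noteq> 0
     then HF {|seed (fst (parents t)) (child_index t i), seed (snd (parents t)) (child_index t i)|}
     else hatom (prod_encode (index t, i)))"
  by auto
termination
  by (relation "measure (\<lambda>(t, i). depth t)") (auto dest: parentsD[OF _ _ surjective_pairing])

declare seed.simps [simp del]

lemma seed_source: "depth t = 0 \<Longrightarrow> seed t i = hatom (prod_encode (index t, i))"
  by (simp add: seed.simps)

lemma seed_parentsE:
  assumes "t \<in> P" "depth t \<noteq> 0" "i < seed_count t"
  obtains a b where "a \<in> P" "b \<in> P" "t \<in> T {a, b}" "depth a < depth t" "depth b < depth t"
    "child_index t i < seed_count a" "child_index t i < seed_count b"
    "seed t i = HF {|seed a (child_index t i), seed b (child_index t i)|}"
proof -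
  obtain a b where ab: "parents t = (a, b)"
    by fastforce
  show ?thesis
    using parentsD[OF assms(1,2) ab] child_index_less_seed_count assms
    by (intro that[of a b]) (simp_all add: seed.simps[of t] ab)
qed

lemma seed_inj:
  assumes "t \<in> P" "t' \<in> P" "i < seed_count t" "i' < seed_count t'" "seed t i = seed t' i'"
  shows "t = t' \<and> i = i'"
  using assms
proof (induction "depth t" arbitrary: t t' i i' rule: less_induct)
  case less
  show ?case
  proof (cases "depth t = 0"; cases "depth t' = 0")
    assume "depth t = 0" "depth t' = 0"
    then have "index t = index t' \<and> i = i'"
      using less.prems(5) by (simp add: seed_source inj_eq[OF inj_hatom] prod_encode_eq)
    then show ?thesis
      using less.prems(1,2) inj_on_index by (auto dest: inj_onD)
  next
    assume "depth t \<noteq> 0" "depth t' \<noteq> 0"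
    obtain a b where ab: "depth a < depth t" "a \<in> P" "b \<in> P"
      "child_index t i < seed_count a" "child_index t i < seed_count b"
      "seed t i = HF {|seed a (child_index t i), seed b (child_index t i)|}"
      using seed_parentsE[OF less.prems(1) \<open>depth t \<noteq> 0\<close> less.prems(3)] by metis
    obtain a' b' where ab': "a' \<in> P" "b' \<in> P"
      "child_index t' i' < seed_count a'" "child_index t' i' < seed_count b'"
      "seed t' i' = HF {|seed a' (child_index t' i'), seed b' (child_index t' i')|}"
      using seed_parentsE[OF less.prems(2) \<open>depth t' \<noteq> 0\<close> less.prems(4)] by metis
    have "seed a (child_index t i) = seed a' (child_index t' i')
        \<or> seed a (child_index t i) = seed b' (child_index t' i')"
      using ab(6) ab'(5) less.prems(5) HF_doubleton_eq_iff by metis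
    then have "child_index t i = child_index t' i'"
      using less.hyps[OF ab(1)] ab ab' by metis
    then show ?thesis
      using child_index_inj less.prems(1,2) by blast
  qed (metis less.prems seed_parentsE seed_source hatom_ne_doubleton)+
qed

definition seeds :: "'p \<Rightarrow> hf set" where
  "seeds t = seed t ` {..<seed_count t}"

definition all_seeds :: "hf set" where
  "all_seeds = (\<Union>t\<in>P. seeds t)"

text \<open>All pairs over a node {a, b} go to its r-greatest target, which is r-above a and b;
  seeds are removed from this bulk so that every seed belongs to its own place only.\<close>
definition bulk :: "('p \<Rightarrow> hf set) \<Rightarrow> 'p \<Rightarrow> hf set" where
  "bulk g p = {HF {|u, v|} | a b u v. a \<in> P \<and> b \<in> P \<and> T {a, b} \<noteq> {} \<and>
     max_wrt r (T {a, b}) = p \<and> (a, p) \<in> r \<and> (b, p) \<in> r \<and> u \<in> g a \<and> v \<in> g b}"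

definition sigma :: "'p \<Rightarrow> hf set" where
  "sigma = wfrec r (\<lambda>g p. seeds p \<union> (bulk g p - all_seeds))"

lemma bulk_cong: "(\<And>a. (a, p) \<in> r \<Longrightarrow> g a = h a) \<Longrightarrow> bulk g p = bulk h p"
  unfolding bulk_def by (simp cong: conj_cong)

lemma sigma_eq: "sigma p = seeds p \<union> (bulk sigma p - all_seeds)"
proof -
  have "bulk (cut sigma r p) p = bulk sigma p"
    by (rule bulk_cong) (simp add: cut_apply)
  then show ?thesis
    unfolding sigma_def by (subst wfrec[OF wf_order]) (simp add: sigma_def)
qed

lemma finite_sigma: "finite (sigma p)"
proof (induction p rule: wf_induct_rule[OF wf_order])
  case (1 p)
  let ?X = "\<Union>a\<in>{a \<in> P. (a, p) \<in> r}. sigma a"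
  have "bulk sigma p \<subseteq> (\<lambda>(u, v). HF {|u, v|}) ` (?X \<times> ?X)"
    unfolding bulk_def by auto
  moreover have "finite ?X"
    using 1 finite_places by auto
  ultimately show ?case
    using sigma_eq[of p] finite_subset unfolding seeds_def by fastforce
qed

lemma seed_in_sigma: "i < seed_count t \<Longrightarrow> seed t i \<in> sigma t"
  using sigma_eq[of t] unfolding seeds_def by blast

lemma sigma_nonempty: "p \<in> P \<Longrightarrow> sigma p \<noteq> {}"
  using seed_in_sigma[of 0 p] finite_places
  by (auto simp: seed_count_def card_gt_0_iff)

lemma sigma_cases:
  assumes "w \<in> sigma p"
  obtains "w \<in> seeds p"
  | a b u v where "w \<notin> all_seeds" "w = HF {|u, v|}" "a \<in> P" "b \<in> P" "T {a, b} \<noteq> {}"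
      "max_wrt r (T {a, b}) = p" "u \<in> sigma a" "v \<in> sigma b"
  using assms sigma_eq[of p] unfolding bulk_def by blast

lemma seeds_subset_all_seeds: "p \<in> P \<Longrightarrow> seeds p \<subseteq> all_seeds"
  unfolding all_seeds_def by blast

lemma doubleton_parents_eq:
  assumes "HF {|u, v|} = HF {|u', v'|}"
    and u_disjoint: "\<And>p q. p \<in> P \<Longrightarrow> q \<in> P \<Longrightarrow> u \<in> sigma p \<Longrightarrow> u \<in> sigma q \<Longrightarrow> p = q"
    and v_disjoint: "\<And>p q. p \<in> P \<Longrightarrow> q \<in> P \<Longrightarrow> v \<in> sigma p \<Longrightarrow> v \<in> sigma q \<Longrightarrow> p = q"
    and "a \<in> P" "b \<in> P" "a' \<in> P" "b' \<in> P"
    and "u \<in> sigma a" "v \<in> sigma b" "u' \<in> sigma a'" "v' \<in> sigma b'"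
  shows "{a, b} = {a', b'}"
proof -
  have "(u = u' \<and> v = v') \<or> (u = v' \<and> v = u')"
    using assms(1) by (metis HF_doubleton_eq_iff)
  then show ?thesis
  proof
    assume "u = u' \<and> v = v'"
    then have "a = a'" "b = b'"
      using u_disjoint[of a a'] v_disjoint[of b b'] assms(4-) by simp_all
    then show ?thesis
      by simp
  next
    assume "u = v' \<and> v = u'"
    then have "a = b'" "b = a'"
      using u_disjoint[of a b'] v_disjoint[of b a'] assms(4-) by simp_all
    then show ?thesis
      by blast
  qed
qed

lemma sigma_disjoint:
  assumes "p \<in> P" "q \<in> P" "w \<in> sigma p" "w \<in> sigma q"
  shows "p = q"
  using assms
proof (induction w arbitrary: p q rule: hf.induct)
  case (HF x)
  show ?case
  proof (cases "HF x \<in> all_seeds")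
    case True
    then have "HF x \<in> seeds p" "HF x \<in> seeds q"
      using HF.prems(3,4) by (auto elim: sigma_cases)
    then obtain i i' where "i < seed_count p" "i' < seed_count q" "seed p i = seed q i'"
      unfolding seeds_def by auto
    then show ?thesis
      using seed_inj HF.prems(1,2) by blast
  next
    case False
    obtain a b u v where ab: "HF x = HF {|u, v|}" "max_wrt r (T {a, b}) = p"
      "a \<in> P" "b \<in> P" "u \<in> sigma a" "v \<in> sigma b"
      using HF.prems(3) False seeds_subset_all_seeds[OF HF.prems(1)]
      by (cases rule: sigma_cases) blast+
    obtain a' b' u' v' where ab': "HF x = HF {|u', v'|}" "max_wrt r (T {a', b'}) = q"
      "a' \<in> P" "b' \<in> P" "u' \<in> sigma a'" "v' \<in> sigma b'"
      using HF.prems(4) False seeds_subset_all_seeds[OF HF.prems(2)]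
      by (cases rule: sigma_cases) blast+
    have u: "u \<in> fset x" and v: "v \<in> fset x"
      using ab(1) by auto
    have "{a, b} = {a', b'}"
      by (rule doubleton_parents_eq[OF _ HF.IH[OF u] HF.IH[OF v]]) (use ab ab' in simp_all)
    then show ?thesis
      using ab(2) ab'(2) by simp
  qed
qed

lemma sigma_elem_doubleton:
  assumes "t \<in> P" "\<not> source_place P T t" "w \<in> sigma t"
  obtains a b u v where "a \<in> P" "b \<in> P" "t \<in> T {a, b}" "u \<in> sigma a" "v \<in> sigma b"
    "w = HF {|u, v|}"
  using assms(3)
proof (cases rule: sigma_cases)
  case 1
  then obtain i where "i < seed_count t" "w = seed t i"
    unfolding seeds_def by blast
  moreover have "depth t \<noteq> 0"
    using source_place_if_depth_0 assms(1,2) by blast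
  ultimately show ?thesis
    using seed_parentsE[OF assms(1)] seed_in_sigma that by metis
next
  case 2
  then show ?thesis
    using max_target_in_target that by metis
qed

lemma doubleton_in_sigma_target:
  assumes "a \<in> P" "b \<in> P" "T {a, b} \<noteq> {}" "u \<in> sigma a" "v \<in> sigma b"
  shows "\<exists>t\<in>T {a, b}. HF {|u, v|} \<in> sigma t"
proof (cases "HF {|u, v|} \<in> all_seeds")
  case False
  have "HF {|u, v|} \<in> bulk sigma (max_wrt r (T {a, b}))"
    using assms below_max_target[OF assms(1-3)] unfolding bulk_def by blast
  then have "HF {|u, v|} \<in> sigma (max_wrt r (T {a, b}))"
    using False sigma_eq by blast
  then show ?thesis
    using max_target_in_target[OF assms(1-3)] by blast
next
  case True
  then obtain t i where ti: "t \<in> P" "i < seed_count t" "HF {|u, v|} = seed t i"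
    unfolding all_seeds_def seeds_def by blast
  then have "depth t \<noteq> 0"
    using seed_source hatom_ne_doubleton by metis
  then obtain a' b' where ab': "a' \<in> P" "b' \<in> P" "t \<in> T {a', b'}"
    "seed a' (child_index t i) \<in> sigma a'" "seed b' (child_index t i) \<in> sigma b'"
    "seed t i = HF {|seed a' (child_index t i), seed b' (child_index t i)|}"
    using seed_parentsE[OF ti(1) _ ti(2)] seed_in_sigma by metis
  have "{a, b} = {a', b'}"
    by (rule doubleton_parents_eq[OF _ sigma_disjoint sigma_disjoint]) (use ti(3) assms ab' in simp_all)
  then show ?thesis
    using ab'(3) ti seed_in_sigma by auto
qed

definition realise :: "'p set \<Rightarrow> hf set" where
  "realise A = (\<Union>p\<in>A \<inter> P. sigma p)"

lemma finite_realise: "finite (realise A)"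
  unfolding realise_def using finite_places finite_sigma by blast

lemma realise_Un: "realise (A \<union> B) = realise A \<union> realise B"
  unfolding realise_def by blast

lemma realise_Diff: "realise (A - B) = realise A - realise B"
  unfolding realise_def using sigma_disjoint by blast

lemma realise_inj:
  assumes "A \<subseteq> P" "B \<subseteq> P" "realise A = realise B"
  shows "A = B"
proof (rule ccontr)
  assume "A \<noteq> B"
  then obtain p where "p \<in> P" "p \<in> A \<longleftrightarrow> p \<notin> B"
    using assms(1,2) by blast
  moreover obtain w where "w \<in> sigma p"
    using sigma_nonempty[OF \<open>p \<in> P\<close>] by blast
  ultimately show False
    using assms sigma_disjoint[of p _ w] unfolding realise_def by blast
qed

lemma realise_tens:
  assumes "A \<subseteq> P" "B \<subseteq> P" "C \<subseteq> P"
    and full: "\<forall>u\<in>B. \<forall>v\<in>C. T {u, v} \<noteq> {} \<and> T {u, v} \<subseteq> A"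
    and covered: "A \<subseteq> \<Union>(T ` tens B C)"
    and exact: "\<Union>(T ` (nodes P - tens B C)) \<inter> A = {}"
  shows "realise A = {HF {|u, v|} | u v. u \<in> realise B \<and> v \<in> realise C}"
proof (intro equalityI subsetI)
  fix w assume "w \<in> {HF {|u, v|} | u v. u \<in> realise B \<and> v \<in> realise C}"
  then obtain u v a b where w: "w = HF {|u, v|}" "a \<in> B" "b \<in> C" "u \<in> sigma a" "v \<in> sigma b"
    unfolding realise_def by blast
  then have "T {a, b} \<noteq> {}" "T {a, b} \<subseteq> A"
    using full by blast+
  then obtain t where "t \<in> A" "w \<in> sigma t"
    using doubleton_in_sigma_target[of a b u v] w assms(2,3) by blast
  then show "w \<in> realise A"
    using assms(1) unfolding realise_def by blast
next
  fix w assume "w \<in> realise A"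
  then obtain t where t: "t \<in> A" "t \<in> P" "w \<in> sigma t"
    unfolding realise_def by blast
  then obtain b0 c0 where "b0 \<in> B" "c0 \<in> C" "t \<in> T {b0, c0}"
    using covered unfolding tens_def by blast
  then have "\<not> source_place P T t"
    using assms(2,3) doubleton_in_nodes unfolding source_place_def by blast
  then obtain a b u v where s: "a \<in> P" "b \<in> P" "t \<in> T {a, b}" "u \<in> sigma a" "v \<in> sigma b"
    "w = HF {|u, v|}"
    using sigma_elem_doubleton t(2,3) by blast
  have "{a, b} \<in> tens B C"
  proof (rule ccontr)
    assume "{a, b} \<notin> tens B C"
    then have "{a, b} \<in> nodes P - tens B C"
      using doubleton_in_nodes s(1,2) by blast
    then show False
      using exact s(3) t(1) by blast
  qed
  then obtain b1 c1 where "b1 \<in> B" "c1 \<in> C" "{a, b} = {b1, c1}"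
    unfolding tens_def by blast
  then have "b1 \<in> B" "c1 \<in> C" "(a = b1 \<and> b = c1) \<or> (a = c1 \<and> b = b1)"
    by (simp_all add: doubleton_eq_iff)
  moreover have "w = HF {|v, u|}"
    using s(6) by (simp add: finsert_commute)
  ultimately show "w \<in> {HF {|u, v|} | u v. u \<in> realise B \<and> v \<in> realise C}"
    using s assms(2,3) unfolding realise_def by blast
qed

lemma satisfies_realise:
  assumes "fulfilling P T F \<Phi>"
  shows "hf_satisfies (\<lambda>x. hf_of_set (realise (F x))) \<Phi>"
  unfolding hf_satisfies_def
proof
  fix l assume l: "l \<in> set \<Phi>"
  then have sub: "\<And>x. x \<in> lit_vars l \<Longrightarrow> F x \<subseteq> P"
    and lit: "fulfills_lit P T F l"
    using assms unfolding fulfilling_def Vars_def by blast+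
  show "hf_sat_lit (\<lambda>x. hf_of_set (realise (F x))) l"
  proof (cases l)
    case (LUn x y z)
    then show ?thesis
      using lit by (simp add: hunion_hf_of_set finite_realise realise_Un)
  next
    case (LDiff x y z)
    then show ?thesis
      using lit by (simp add: hdiff_hf_of_set finite_realise realise_Diff)
  next
    case (LTens x y z)
    then have "realise (F x) = {HF {|u, v|} | u v. u \<in> realise (F y) \<and> v \<in> realise (F z)}"
      using lit sub by (intro realise_tens) auto
    then show ?thesis
      using LTens by (simp add: htens_hf_of_set finite_realise)
  next
    case (LNeq x y)
    then have "F x \<noteq> F y" "F x \<subseteq> P" "F y \<subseteq> P"
      using lit sub by simp_all
    then have "realise (F x) \<noteq> realise (F y)"
      using realise_inj by blast
    then show ?thesis
      using LNeq by (simp add: hf_of_set_inject finite_realise)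
  qed
qed

end

theorem lemma15:
  fixes \<Phi> :: "'v conj" and P :: "'p set" and T :: "'p set \<Rightarrow> 'p set"
  assumes "tgraph P T"
    and "finite P"
    and "accessible P T"
    and "\<exists>r. topological_order P T r"
    and "graph_fulfills P T \<Phi>"
  shows "\<exists>M :: 'v \<Rightarrow> hf. hf_satisfies M \<Phi>"
proof -
  obtain r where "topological_order P T r"
    using assms(4) by blast
  then interpret ordered_tgraph P T r
    using assms(1-3) by unfold_locales
  obtain F where "fulfilling P T F \<Phi>"
    using assms(5) unfolding graph_fulfills_def by blast
  then show ?thesis
    using satisfies_realise by blast
qed

end
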